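(* Let $C_2>0$, $\rho=C_1\in\{1,-1\}$, $L>0$, $I=[0,L]$, and $Z(z)=\frac{1}{2C_2}(1-e^{-2C_2z})$, $T(z,t)=e^{-C_2z}t$, $\widetilde I=Z(I)$. Let $Q(Z,T)$ be a solution on $\widetilde I$ of $iQ_Z+Q_{TT}+\rho|Q|^2Q=0$ and let $v(z,t)=e^{i\frac{C_2}{4}t^2-\frac{C_2}{2}z}Q(Z(z),T(z,t))$, which is a solution on $I$ of $$iv_z+v_{tt}+C_1e^{-C_2z}|v|^2v+\frac{C_2^2}{4}t^2v=0 .$$ Then $t\mapsto t^2v(z,t)$ belongs to $L^2(\mathbb{R})$ for every $z\in I$ if and only if $T\mapsto T^2Q(Z,T)$ belongs to $L^2(\mathbb{R})$ for every $Z\in\widetilde I$. *)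

theory Defs
  imports "HOL-Analysis.Analysis"
begin

definition L2_fun :: "(real \<Rightarrow> complex) \<Rightarrow> bool" where
  "L2_fun f \<longleftrightarrow> f \<in> borel_measurable lborel \<and> integrable lborel (\<lambda>t. (cmod (f t))\<^sup>2)"

definition Zmap :: "real \<Rightarrow> real \<Rightarrow> real" where
  "Zmap C2 z = (1 - exp (- 2 * C2 * z)) / (2 * C2)"

definition Tmap :: "real \<Rightarrow> real \<Rightarrow> real \<Rightarrow> real" where
  "Tmap C2 z t = exp (- C2 * z) * t"

definition vtrans :: "real \<Rightarrow> (real \<Rightarrow> real \<Rightarrow> complex) \<Rightarrow> real \<Rightarrow> real \<Rightarrow> complex" where
  "vtrans C2 Q z t =
     exp (\<i> * complex_of_real (C2 / 4 * t\<^sup>2) - complex_of_real (C2 / 2 * z))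
       * Q (Zmap C2 z) (Tmap C2 z t)"

definition nls_solution :: "real \<Rightarrow> (real \<Rightarrow> real \<Rightarrow> complex) \<Rightarrow> real set \<Rightarrow> bool" where
  "nls_solution rho Q S \<longleftrightarrow>
     (\<exists>QZ QT QTT. \<forall>Z\<in>S. \<forall>T.
        ((\<lambda>Z'. Q Z' T) has_vector_derivative QZ Z T) (at Z within S) \<and>
        ((\<lambda>T'. Q Z T') has_vector_derivative QT Z T) (at T) \<and>
        ((\<lambda>T'. QT Z T') has_vector_derivative QTT Z T) (at T) \<and>
        \<i> * QZ Z T + QTT Z T + complex_of_real (rho * (cmod (Q Z T))\<^sup>2) * Q Z T = 0)"

end

theory Submission
  imports Defs
begin

text \<open>The phase factor of v has modulus e^{-C2 z/2}, so with a = e^{-C2 z} the substitution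
  T = a t gives |t^2 v(z,t)|^2 = a^{-3} |T^2 Q(Z(z),T)|^2. A rescaling of the variable and a
  constant factor do not affect square integrability, and continuity in T (part of being a
  solution) supplies measurability.\<close>

lemma continuous_on_imp_borel_measurable_lborel:
  fixes f :: "real \<Rightarrow> 'a::topological_space"
  assumes "continuous_on UNIV f"
  shows "f \<in> borel_measurable lborel"
  using borel_measurable_continuous_onI[OF assms]
  by (simp add: measurable_cong_sets[OF sets_lborel refl])

lemma L2_fun_iff_rescaled:
  fixes f h :: "real \<Rightarrow> complex" and a c :: real
  assumes f_meas: "f \<in> borel_measurable lborel" and h_meas: "h \<in> borel_measurable lborel"
    and "a \<noteq> 0" and "c \<noteq> 0"
    and norm_eq: "\<And>t. (cmod (f t))\<^sup>2 = c * (cmod (h (a * t)))\<^sup>2"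
  shows "L2_fun f \<longleftrightarrow> L2_fun h"
proof -
  have "integrable lborel (\<lambda>t. (cmod (f t))\<^sup>2) \<longleftrightarrow>
        integrable lborel (\<lambda>t. (cmod (h (0 + a * t)))\<^sup>2)"
    using norm_eq \<open>c \<noteq> 0\<close> by simp
  also have "\<dots> \<longleftrightarrow> integrable lborel (\<lambda>t. (cmod (h t))\<^sup>2)"
    using lborel_integrable_real_affine_iff[OF \<open>a \<noteq> 0\<close>] .
  finally show ?thesis
    unfolding L2_fun_def using f_meas h_meas by simp
qed

lemma norm_vtrans:
  "cmod (vtrans C2 Q z t) = exp (- (C2 / 2 * z)) * cmod (Q (Zmap C2 z) (Tmap C2 z t))"
  by (simp add: vtrans_def norm_mult norm_exp_eq_Re)

lemma nls_solution_continuous_on_slice: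
  assumes "nls_solution rho Q S" and "Z \<in> S"
  shows "continuous_on UNIV (Q Z)"
proof -
  obtain QT where "\<And>T. ((\<lambda>T'. Q Z T') has_vector_derivative QT T) (at T)"
    using assms unfolding nls_solution_def by blast
  then show ?thesis
    by (metis continuous_at_imp_continuous_on has_vector_derivative_continuous)
qed

lemma L2_weighted_vtrans_iff:
  fixes C2 z :: real and Q :: "real \<Rightarrow> real \<Rightarrow> complex"
  assumes cont: "continuous_on UNIV (Q (Zmap C2 z))"
  shows "L2_fun (\<lambda>t. complex_of_real (t\<^sup>2) * vtrans C2 Q z t)
     \<longleftrightarrow> L2_fun (\<lambda>T. complex_of_real (T\<^sup>2) * Q (Zmap C2 z) T)"
proof (rule L2_fun_iff_rescaled[where a = "exp (- C2 * z)" and c = "1 / exp (- C2 * z) ^ 3"])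
  define a where "a = exp (- C2 * z)"
  have "a > 0" unfolding a_def by simp
  have cont_scaled: "continuous_on UNIV (\<lambda>t. Q (Zmap C2 z) (a * t))"
    by (rule continuous_on_compose2[OF cont]) (auto intro!: continuous_intros)
  show "(\<lambda>t. complex_of_real (t\<^sup>2) * vtrans C2 Q z t) \<in> borel_measurable lborel"
    unfolding vtrans_def Tmap_def a_def[symmetric]
    by (intro continuous_on_imp_borel_measurable_lborel continuous_intros cont_scaled)
  show "(\<lambda>T. complex_of_real (T\<^sup>2) * Q (Zmap C2 z) T) \<in> borel_measurable lborel"
    by (intro continuous_on_imp_borel_measurable_lborel continuous_intros cont)
  show "exp (- C2 * z) \<noteq> 0" "1 / exp (- C2 * z) ^ 3 \<noteq> 0"
    by auto
  fix t
  have phase: "(exp (- (C2 / 2 * z)))\<^sup>2 = a"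
    unfolding a_def by (simp add: power2_eq_square flip: exp_add)
  show "(cmod (complex_of_real (t\<^sup>2) * vtrans C2 Q z t))\<^sup>2 =
      1 / exp (- C2 * z) ^ 3 * (cmod (complex_of_real ((exp (- C2 * z) * t)\<^sup>2)
        * Q (Zmap C2 z) (exp (- C2 * z) * t)))\<^sup>2"
    unfolding a_def[symmetric] norm_mult norm_vtrans norm_of_real Tmap_def a_def[symmetric]
      power_mult_distrib phase
    using \<open>a > 0\<close> by (simp add: field_simps power2_eq_square power3_eq_cube)
qed

theorem lemma3p4p1:
  fixes C2 rho L :: real and Q :: "real \<Rightarrow> real \<Rightarrow> complex"
  assumes "C2 > 0" and "rho \<in> {1, -1}" and "L > 0"
    and "nls_solution rho Q (Zmap C2 ` {0..L})"
  shows "(\<forall>z\<in>{0..L}. L2_fun (\<lambda>t. complex_of_real (t\<^sup>2) * vtrans C2 Q z t))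
     \<longleftrightarrow> (\<forall>Z\<in>Zmap C2 ` {0..L}. L2_fun (\<lambda>T. complex_of_real (T\<^sup>2) * Q Z T))"
proof -
  have "L2_fun (\<lambda>t. complex_of_real (t\<^sup>2) * vtrans C2 Q z t)
      \<longleftrightarrow> L2_fun (\<lambda>T. complex_of_real (T\<^sup>2) * Q (Zmap C2 z) T)" if "z \<in> {0..L}" for z
    using L2_weighted_vtrans_iff nls_solution_continuous_on_slice[OF assms(4)] that by blast
  then show ?thesis by auto
qed

end
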